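(* Let $K=2$ and suppose that for every horizon $T$ (a multiple of $100$) a valid pair $(\eta,\gamma)=(\eta_T,\gamma_T)$ in the non-trivial regime is chosen. Then there exists $T_0$ such that for all $T\ge T_0$, WSU-UX run on the two-phase loss sequence satisfies $$\mathbb{E}[\ln\pi_{T+1,1}+\ln K]\ge c_1,\qquad c_1=\ln\tfrac54>0.$$
   Context: WSU-UX. Fix integers $K\ge 2$ and $T\ge 1$ and hyperparameters $\eta,\gamma$. The pair $(\eta,\gamma)$ is called valid if $\eta,\gamma\in(0,1/2)$ and $\eta K/\gamma\le 1/2$. Given a fixed loss sequence $\ell_t\in[0,1]^K$, WSU-UX sets $\pi_{1,i}=1/K$ and in each round $t$: forms $\tilde\pi_{t,i}=(1-\gamma)\pi_{t,i}+\gamma/K$; draws $I_t$ with $\Pr(I_t=i\mid\mathcal F_{t-1})=\tilde\pi_{t,i}$; sets $\hat\ell_{t,i}=\ell_{t,i}\mathbf 1[I_t=i]/\tilde\pi_{t,i}$; and updates $\pi_{t+1,i}=\pi_{t,i}\bigl(1-\eta(\hat\ell_{t,i}-\sum_{j}\pi_{t,j}\hat\ell_{t,j})\bigr)$; $\mathcal F_t$ is the history generated by $I_1,\dots,I_t$. Non-trivial regime: $\eta\ge T^{-2/3}$ and $\gamma\le T^{-1/3}$. Two-phase loss sequence ($K=2$, $T$ a multiple of $100$, $T_1=T/100$): $\ell_{t,1}=1,\ell_{t,2}=0$ for $1\le t\le T_1$ and $\ell_{t,1}=0,\ell_{t,2}=1$ for $T_1<t\le T$. *)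

theory Defs
  imports Complex_Main
begin

text \<open>A loss sequence is l :: nat => nat => real,
  l t i = loss of arm i at round t (t >= 1). Histories are stored in REVERSED order:
  the list (I_t # ... # I_1) records the draws of rounds 1..t.\<close>

definition valid_pair :: "nat \<Rightarrow> real \<Rightarrow> real \<Rightarrow> bool" where
  "valid_pair K \<eta> \<gamma> \<longleftrightarrow> 0 < \<eta> \<and> \<eta> < 1/2 \<and> 0 < \<gamma> \<and> \<gamma> < 1/2 \<and> \<eta> * real K / \<gamma> \<le> 1/2"

definition nontrivial :: "nat \<Rightarrow> real \<Rightarrow> real \<Rightarrow> bool" where
  "nontrivial T \<eta> \<gamma> \<longleftrightarrow> \<eta> \<ge> real T powr (-2/3) \<and> \<gamma> \<le> real T powr (-1/3)"

definition mix :: "nat \<Rightarrow> real \<Rightarrow> (nat \<Rightarrow> real) \<Rightarrow> nat \<Rightarrow> real" where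
  "mix K \<gamma> p i = (1 - \<gamma>) * p i + \<gamma> / real K"

definition loss_est :: "nat \<Rightarrow> real \<Rightarrow> (nat \<Rightarrow> nat \<Rightarrow> real) \<Rightarrow> nat \<Rightarrow> (nat \<Rightarrow> real) \<Rightarrow> nat \<Rightarrow> nat \<Rightarrow> real" where
  "loss_est K \<gamma> l t p It i = (if i = It then l t i / mix K \<gamma> p i else 0)"

definition wsu_step :: "nat \<Rightarrow> real \<Rightarrow> real \<Rightarrow> (nat \<Rightarrow> nat \<Rightarrow> real) \<Rightarrow> nat \<Rightarrow> (nat \<Rightarrow> real) \<Rightarrow> nat \<Rightarrow> (nat \<Rightarrow> real)" where
  "wsu_step K \<eta> \<gamma> l t p It = (\<lambda>i. p i * (1 - \<eta> * (loss_est K \<gamma> l t p It i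
       - (\<Sum>j\<in>{1..K}. p j * loss_est K \<gamma> l t p It j))))"

text \<open>wsu_pi ... h = \<pi>_{t+1} after the (reversed) history h of length t.\<close>
fun wsu_pi :: "nat \<Rightarrow> real \<Rightarrow> real \<Rightarrow> (nat \<Rightarrow> nat \<Rightarrow> real) \<Rightarrow> nat list \<Rightarrow> (nat \<Rightarrow> real)" where
  "wsu_pi K \<eta> \<gamma> l [] = (\<lambda>i. 1 / real K)"
| "wsu_pi K \<eta> \<gamma> l (It # h) = wsu_step K \<eta> \<gamma> l (length h + 1) (wsu_pi K \<eta> \<gamma> l h) It"

text \<open>Probability of a (reversed) history: product of Pr(I_t = i | F_{t-1}) = tilde-pi_{t,i}.\<close>
fun hist_prob :: "nat \<Rightarrow> real \<Rightarrow> real \<Rightarrow> (nat \<Rightarrow> nat \<Rightarrow> real) \<Rightarrow> nat list \<Rightarrow> real" where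
  "hist_prob K \<eta> \<gamma> l [] = 1"
| "hist_prob K \<eta> \<gamma> l (It # h) = hist_prob K \<eta> \<gamma> l h * mix K \<gamma> (wsu_pi K \<eta> \<gamma> l h) It"

definition wsu_expect :: "nat \<Rightarrow> real \<Rightarrow> real \<Rightarrow> (nat \<Rightarrow> nat \<Rightarrow> real) \<Rightarrow> nat \<Rightarrow> ((nat \<Rightarrow> real) \<Rightarrow> real) \<Rightarrow> real" where
  "wsu_expect K \<eta> \<gamma> l T f =
     (\<Sum>h\<in>{h. length h = T \<and> set h \<subseteq> {1..K}}. hist_prob K \<eta> \<gamma> l h * f (wsu_pi K \<eta> \<gamma> l h))"

definition two_phase :: "nat \<Rightarrow> nat \<Rightarrow> nat \<Rightarrow> real" where
  "two_phase T t i = (if t \<le> T div 100 then (if i = 1 then 1 else 0) else (if i = 2 then 1 else 0))"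

end

theory Submission
  imports Defs
begin

text \<open>Track the odds \<open>\<pi>\<^sub>2/\<pi>\<^sub>1\<close>. In a round where only arm \<open>a\<close> suffers loss, the
  weights change only if \<open>a\<close> is drawn, and that happens with probability at least
  \<open>\<gamma>/2 \<ge> 2\<eta>\<close>. Averaging over the draw, the odds of the other arm against \<open>a\<close> grow in
  expectation by at most the factor \<open>1 + 2\<eta>\<close>, while the odds of \<open>a\<close> against the other
  arm shrink by at least the factor \<open>1 - 2\<eta>/3\<close>. Over the \<open>T/100\<close> rounds of the first phase
  and the \<open>99T/100\<close> rounds of the second this gives
  \<open>E[\<pi>\<^sub>2/\<pi>\<^sub>1] \<le> exp (2\<eta>T/100 - (2\<eta>/3)(99T/100)) = exp (-0.64 \<eta>T)\<close>, and \<open>\<eta>T \<ge> T\<^bsup>1/3\<^esup>\<close> in the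
  non-trivial regime. Since \<open>ln \<pi>\<^sub>1 \<ge> -\<pi>\<^sub>2/\<pi>\<^sub>1\<close>, this yields
  \<open>E[ln \<pi>\<^sub>1 + ln 2] \<ge> ln 2 - exp (-6) \<ge> ln (5/4)\<close> once \<open>T \<ge> 1000\<close>.\<close>

definition histories :: "nat \<Rightarrow> nat \<Rightarrow> nat list set" where
  "histories K n = {h. length h = n \<and> set h \<subseteq> {1..K}}"

lemma wsu_expect_histories:
  "wsu_expect K \<eta> \<gamma> l n f = (\<Sum>h\<in>histories K n. hist_prob K \<eta> \<gamma> l h * f (wsu_pi K \<eta> \<gamma> l h))"
  unfolding wsu_expect_def histories_def ..

lemma histories_0: "histories K 0 = {[]}"
  unfolding histories_def by auto

lemma histories_Suc: "histories K (Suc n) = (\<lambda>(i, h). i # h) ` ({1..K} \<times> histories K n)"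
  unfolding histories_def by (auto simp: length_Suc_conv image_iff)

lemma sum_histories_Suc:
  "(\<Sum>h\<in>histories K (Suc n). F h) = (\<Sum>h\<in>histories K n. \<Sum>i=1..K. F (i # h))"
proof -
  have "inj_on (\<lambda>(i, h). i # h) ({1..K} \<times> histories K n)"
    by (auto simp: inj_on_def)
  then have "(\<Sum>h\<in>histories K (Suc n). F h) = (\<Sum>(i, h)\<in>{1..K} \<times> histories K n. F (i # h))"
    unfolding histories_Suc by (simp add: sum.reindex split_def)
  also have "\<dots> = (\<Sum>i=1..K. \<Sum>h\<in>histories K n. F (i # h))"
    by (rule sum.cartesian_product[symmetric])
  also have "\<dots> = (\<Sum>h\<in>histories K n. \<Sum>i=1..K. F (i # h))"
    by (rule sum.swap)
  finally show ?thesis .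
qed

lemma wsu_expect_0: "wsu_expect K \<eta> \<gamma> l 0 f = f (\<lambda>i. 1 / real K)"
  by (simp add: wsu_expect_histories histories_0)

lemma wsu_expect_Suc:
  "wsu_expect K \<eta> \<gamma> l (Suc n) f =
     wsu_expect K \<eta> \<gamma> l n (\<lambda>p. \<Sum>i=1..K. mix K \<gamma> p i * f (wsu_step K \<eta> \<gamma> l (Suc n) p i))"
  unfolding wsu_expect_histories sum_histories_Suc
  by (intro sum.cong) (auto simp: histories_def sum_distrib_left mult.assoc)

lemma wsu_expect_mono:
  assumes "\<And>h. set h \<subseteq> {1..K} \<Longrightarrow> 0 \<le> hist_prob K \<eta> \<gamma> l h"
    and "\<And>h. set h \<subseteq> {1..K} \<Longrightarrow> f (wsu_pi K \<eta> \<gamma> l h) \<le> f' (wsu_pi K \<eta> \<gamma> l h)"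
  shows "wsu_expect K \<eta> \<gamma> l n f \<le> wsu_expect K \<eta> \<gamma> l n f'"
  unfolding wsu_expect_histories using assms
  by (intro sum_mono mult_left_mono) (auto simp: histories_def)

lemma wsu_expect_cmult: "wsu_expect K \<eta> \<gamma> l n (\<lambda>p. c * f p) = c * wsu_expect K \<eta> \<gamma> l n f"
  unfolding wsu_expect_histories by (simp add: sum_distrib_left ac_simps)

lemma wsu_expect_diff:
  "wsu_expect K \<eta> \<gamma> l n (\<lambda>p. f p - f' p) = wsu_expect K \<eta> \<gamma> l n f - wsu_expect K \<eta> \<gamma> l n f'"
  unfolding wsu_expect_histories by (simp add: right_diff_distrib sum_subtractf)

lemma sum_mix:
  assumes "K \<ge> 1" "(\<Sum>i=1..K. p i) = 1"
  shows "(\<Sum>i=1..K. mix K \<gamma> p i) = 1"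
  using assms by (simp add: mix_def sum.distrib sum_distrib_left[symmetric])

lemma wsu_expect_const:
  assumes "K \<ge> 1" and "\<And>h. set h \<subseteq> {1..K} \<Longrightarrow> (\<Sum>i=1..K. wsu_pi K \<eta> \<gamma> l h i) = 1"
  shows "wsu_expect K \<eta> \<gamma> l n (\<lambda>_. c) = c"
proof (induction n)
  case 0
  show ?case by (simp add: wsu_expect_0)
next
  case (Suc n)
  have "wsu_expect K \<eta> \<gamma> l (Suc n) (\<lambda>_. c) = wsu_expect K \<eta> \<gamma> l n (\<lambda>p. c * (\<Sum>i=1..K. mix K \<gamma> p i))"
    by (simp add: wsu_expect_Suc sum_distrib_left ac_simps)
  also have "\<dots> = wsu_expect K \<eta> \<gamma> l n (\<lambda>_. c)"
    unfolding wsu_expect_histories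
  proof (rule sum.cong)
    fix h assume "h \<in> histories K n"
    then have "(\<Sum>i=1..K. mix K \<gamma> (wsu_pi K \<eta> \<gamma> l h) i) = 1"
      using assms by (intro sum_mix) (auto simp: histories_def)
    then show "hist_prob K \<eta> \<gamma> l h * (c * (\<Sum>i=1..K. mix K \<gamma> (wsu_pi K \<eta> \<gamma> l h) i))
        = hist_prob K \<eta> \<gamma> l h * c" by simp
  qed simp
  finally show ?case using Suc by simp
qed

lemma wsu_expect_le_prod:
  assumes nonneg: "\<And>h. set h \<subseteq> {1..K} \<Longrightarrow> 0 \<le> hist_prob K \<eta> \<gamma> l h"
    and inv: "\<And>h. set h \<subseteq> {1..K} \<Longrightarrow> P (wsu_pi K \<eta> \<gamma> l h)"
    and step: "\<And>t p. P p \<Longrightarrow> (\<Sum>i=1..K. mix K \<gamma> p i * f (wsu_step K \<eta> \<gamma> l t p i)) \<le> c t * f p"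
    and c_nonneg: "\<And>t. 0 \<le> c t"
  shows "wsu_expect K \<eta> \<gamma> l n f \<le> (\<Prod>t=1..n. c t) * f (\<lambda>i. 1 / real K)"
proof (induction n)
  case 0
  show ?case by (simp add: wsu_expect_0)
next
  case (Suc n)
  have "wsu_expect K \<eta> \<gamma> l (Suc n) f \<le> wsu_expect K \<eta> \<gamma> l n (\<lambda>p. c (Suc n) * f p)"
    unfolding wsu_expect_Suc by (rule wsu_expect_mono, fact nonneg, rule step, rule inv)
  also have "\<dots> \<le> c (Suc n) * ((\<Prod>t=1..n. c t) * f (\<lambda>i. 1 / real K))"
    unfolding wsu_expect_cmult using Suc c_nonneg by (rule mult_left_mono)
  finally show ?case by (simp add: prod.nat_ivl_Suc' ac_simps)
qed

text \<open>The left-hand sides below are the expected odds after a round in which only arm \<open>a\<close>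
  (weight \<open>pa\<close>) is charged and is drawn with probability \<open>x\<close>: a draw of \<open>a\<close> moves the weights
  to \<open>pa (x - \<eta> pb) / x\<close> and \<open>pb (x + \<eta> pa) / x\<close>, any other draw leaves them unchanged.\<close>

lemma odds_growth_bound:
  fixes pa pb x \<eta> :: real
  assumes "0 < pa" "0 < pb" "pa + pb = 1" "0 < \<eta>" "2 * \<eta> \<le> x"
  shows "x * ((pb * (x + \<eta> * pa) / x) / (pa * (x - \<eta> * pb) / x)) + (1 - x) * (pb / pa)
           \<le> (1 + 2 * \<eta>) * (pb / pa)"
proof -
  have "\<eta> * pb \<le> \<eta>" "0 < \<eta> * pb" using assms by (simp_all add: mult_left_le)
  then have small: "2 * (\<eta> * pb) \<le> x" and d: "0 < x - \<eta> * pb" and "0 < x"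
    using assms by linarith+
  have eq: "x + \<eta> * pa = (x - \<eta> * pb) + \<eta>"
    using assms(3) by (simp add: algebra_simps flip: distrib_left)
  have "(pb * (x + \<eta> * pa) / x) / (pa * (x - \<eta> * pb) / x)
      = (pb / pa) * ((x + \<eta> * pa) / (x - \<eta> * pb))"
    using \<open>0 < x\<close> by simp
  also have "(x + \<eta> * pa) / (x - \<eta> * pb) = 1 + \<eta> / (x - \<eta> * pb)"
    unfolding eq using d by (simp add: add_divide_distrib)
  finally have ratio: "(pb * (x + \<eta> * pa) / x) / (pa * (x - \<eta> * pb) / x)
      = (pb / pa) * (1 + \<eta> / (x - \<eta> * pb))" .
  have "x * ((pb * (x + \<eta> * pa) / x) / (pa * (x - \<eta> * pb) / x)) + (1 - x) * (pb / pa)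
      = (pb / pa) * (1 + \<eta> * x / (x - \<eta> * pb))"
    unfolding ratio by (simp add: algebra_simps add_divide_distrib[symmetric])
  also have "\<dots> \<le> (pb / pa) * (1 + 2 * \<eta>)"
    using assms small d by (intro mult_left_mono) (simp_all add: field_simps)
  finally show ?thesis by (simp only: mult.commute)
qed

lemma odds_decay_bound:
  fixes pa pb x \<eta> :: real
  assumes "0 < pa" "0 < pb" "pa + pb = 1" "0 < \<eta>" "2 * \<eta> \<le> x"
  shows "x * ((pa * (x - \<eta> * pb) / x) / (pb * (x + \<eta> * pa) / x)) + (1 - x) * (pa / pb)
           \<le> (1 - 2 * \<eta> / 3) * (pa / pb)"
proof -
  have "\<eta> * pa \<le> \<eta>" "0 < \<eta> * pa" using assms by (simp_all add: mult_left_le)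
  then have small: "2 * (\<eta> * pa) \<le> x" and d: "0 < x + \<eta> * pa" and "0 < x"
    using assms by linarith+
  have eq: "x - \<eta> * pb = (x + \<eta> * pa) - \<eta>"
    using assms(3) by (simp add: algebra_simps flip: distrib_left)
  have "(pa * (x - \<eta> * pb) / x) / (pb * (x + \<eta> * pa) / x)
      = (pa / pb) * ((x - \<eta> * pb) / (x + \<eta> * pa))"
    using \<open>0 < x\<close> by simp
  also have "(x - \<eta> * pb) / (x + \<eta> * pa) = 1 - \<eta> / (x + \<eta> * pa)"
    unfolding eq using d by (simp add: diff_divide_distrib)
  finally have ratio: "(pa * (x - \<eta> * pb) / x) / (pb * (x + \<eta> * pa) / x)
      = (pa / pb) * (1 - \<eta> / (x + \<eta> * pa))" .
  have "x * ((pa * (x - \<eta> * pb) / x) / (pb * (x + \<eta> * pa) / x)) + (1 - x) * (pa / pb)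
      = (pa / pb) * (1 - \<eta> * x / (x + \<eta> * pa))"
    unfolding ratio by (simp add: algebra_simps add_divide_distrib[symmetric])
  also have "\<dots> \<le> (pa / pb) * (1 - 2 * \<eta> / 3)"
    using assms small d by (intro mult_left_mono) (simp_all add: field_simps)
  finally show ?thesis by (simp only: mult.commute)
qed

lemma two_arms_iff: "{a, b} = {1, 2::nat} \<longleftrightarrow> a = 1 \<and> b = 2 \<or> a = 2 \<and> b = 1"
  by (auto simp: doubleton_eq_iff)

lemma sum_two_arms:
  assumes "{a, b} = {1, 2::nat}"
  shows "(\<Sum>i=1..2. f i) = f a + f b"
  using assms unfolding two_arms_iff by (auto simp: numeral_2_eq_2 add.commute)

lemma wsu_step_penalized:
  fixes a b :: nat and p :: "nat \<Rightarrow> real" and \<gamma> :: real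
  defines "x \<equiv> mix 2 \<gamma> p a"
  assumes ab: "{a, b} = {1, 2}" and loss: "l t a = 1" "l t b = 0"
    and p: "p a + p b = 1" and x: "x \<noteq> 0"
  shows "wsu_step 2 \<eta> \<gamma> l t p a a = p a * (x - \<eta> * p b) / x"
    and "wsu_step 2 \<eta> \<gamma> l t p a b = p b * (x + \<eta> * p a) / x"
    and "wsu_step 2 \<eta> \<gamma> l t p b = p"
proof -
  have "a \<noteq> b" using ab unfolding two_arms_iff by auto
  have est: "loss_est 2 \<gamma> l t p a a = 1 / x" "loss_est 2 \<gamma> l t p a b = 0"
    "loss_est 2 \<gamma> l t p b = (\<lambda>_. 0)"
    using loss \<open>a \<noteq> b\<close> by (auto simp: loss_est_def x_def)
  have avg: "(\<Sum>j\<in>{1..2}. p j * loss_est 2 \<gamma> l t p a j) = p a / x"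
    unfolding sum_two_arms[OF ab] using est by simp
  have "wsu_step 2 \<eta> \<gamma> l t p a a = p a * (1 - \<eta> * (1 / x - p a / x))"
    unfolding wsu_step_def avg est ..
  also have "1 / x - p a / x = p b / x"
    using p by (simp add: diff_divide_distrib[symmetric] eq_diff_eq')
  also have "p a * (1 - \<eta> * (p b / x)) = p a * (x - \<eta> * p b) / x"
    using x by (simp add: field_simps)
  finally show "wsu_step 2 \<eta> \<gamma> l t p a a = p a * (x - \<eta> * p b) / x" .
  have "wsu_step 2 \<eta> \<gamma> l t p a b = p b * (1 - \<eta> * (0 - p a / x))"
    unfolding wsu_step_def avg est ..
  also have "\<dots> = p b * (x + \<eta> * p a) / x"
    using x by (simp add: field_simps)
  finally show "wsu_step 2 \<eta> \<gamma> l t p a b = p b * (x + \<eta> * p a) / x" .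
  show "wsu_step 2 \<eta> \<gamma> l t p b = p"
    by (simp add: wsu_step_def est)
qed

lemma valid_pair_mix_ge:
  assumes "valid_pair 2 \<eta> \<gamma>" "0 \<le> p i"
  shows "2 * \<eta> \<le> mix 2 \<gamma> p i"
proof -
  have "4 * \<eta> \<le> \<gamma>" using assms(1) unfolding valid_pair_def by (auto simp: field_simps)
  moreover have "0 \<le> (1 - \<gamma>) * p i" using assms by (simp add: valid_pair_def)
  ultimately show ?thesis by (simp add: mix_def)
qed

lemma penalized_round:
  assumes valid: "valid_pair 2 \<eta> \<gamma>" and ab: "{a, b} = {1, 2}"
    and loss: "l t a = 1" "l t b = 0"
    and p: "0 < p a" "0 < p b" "p a + p b = 1"
  defines "q \<equiv> wsu_step 2 \<eta> \<gamma> l t p"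
  shows "i \<in> {a, b} \<Longrightarrow> 0 < q i a \<and> 0 < q i b \<and> q i a + q i b = 1"
    and "(\<Sum>i=1..2. mix 2 \<gamma> p i * (q i b / q i a)) \<le> (1 + 2 * \<eta>) * (p b / p a)"
    and "(\<Sum>i=1..2. mix 2 \<gamma> p i * (q i a / q i b)) \<le> (1 - 2 * \<eta> / 3) * (p a / p b)"
proof -
  define x where "x = mix 2 \<gamma> p a"
  have "0 < \<eta>" using valid by (simp add: valid_pair_def)
  have x: "2 * \<eta> \<le> x" unfolding x_def using valid p by (intro valid_pair_mix_ge) auto
  then have "0 < x" using \<open>0 < \<eta>\<close> by linarith
  have mix_b: "mix 2 \<gamma> p b = 1 - x"
    using p(3) by (simp add: x_def mix_def algebra_simps flip: distrib_left)
  have "mix 2 \<gamma> p a \<noteq> 0" using \<open>0 < x\<close> by (simp add: x_def)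
  note q = wsu_step_penalized[where a = a and b = b and l = l and t = t and p = p
      and \<gamma> = \<gamma> and \<eta> = \<eta>, OF ab loss p(3) this, folded x_def q_def]
  have "p b \<le> 1" using p by linarith
  then have "\<eta> * p b \<le> \<eta>" using \<open>0 < \<eta>\<close> by (simp add: mult_left_le)
  then have "\<eta> * p b < x" using \<open>0 < \<eta>\<close> x by linarith
  moreover have "0 < \<eta> * p a" using p \<open>0 < \<eta>\<close> by simp
  ultimately have "0 < q a a" "0 < q a b"
    using p \<open>0 < x\<close> unfolding q(1,2) by (simp_all add: add_pos_pos)
  moreover have "p a * (x - \<eta> * p b) + p b * (x + \<eta> * p a) = x * (p a + p b)"
    by (simp add: algebra_simps)
  then have "q a a + q a b = 1"
    using p(3) \<open>0 < x\<close> unfolding q(1,2) by (simp add: add_divide_distrib[symmetric])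
  ultimately have "0 < q a a \<and> 0 < q a b \<and> q a a + q a b = 1" by blast
  then show "i \<in> {a, b} \<Longrightarrow> 0 < q i a \<and> 0 < q i b \<and> q i a + q i b = 1"
    using q p \<open>0 < x\<close> by auto
  show "(\<Sum>i=1..2. mix 2 \<gamma> p i * (q i b / q i a)) \<le> (1 + 2 * \<eta>) * (p b / p a)"
    unfolding sum_two_arms[OF ab] q mix_b using odds_growth_bound[OF p \<open>0 < \<eta>\<close> x]
    by (simp add: x_def)
  show "(\<Sum>i=1..2. mix 2 \<gamma> p i * (q i a / q i b)) \<le> (1 - 2 * \<eta> / 3) * (p a / p b)"
    unfolding sum_two_arms[OF ab] q mix_b using odds_decay_bound[OF p \<open>0 < \<eta>\<close> x]
    by (simp add: x_def)
qed

definition pos_prob2 :: "(nat \<Rightarrow> real) \<Rightarrow> bool" where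
  "pos_prob2 p \<longleftrightarrow> 0 < p 1 \<and> 0 < p 2 \<and> p 1 + p 2 = 1"

definition odds :: "(nat \<Rightarrow> real) \<Rightarrow> real" where
  "odds p = p 2 / p 1"

lemma pos_prob2_arms: "{a, b} = {1, 2} \<Longrightarrow> pos_prob2 p \<longleftrightarrow> 0 < p a \<and> 0 < p b \<and> p a + p b = 1"
  unfolding two_arms_iff pos_prob2_def by auto

lemma wsu_pi_pos_prob2:
  assumes valid: "valid_pair 2 \<eta> \<gamma>"
    and indicator: "\<And>t. \<exists>a b. {a, b} = {1, 2} \<and> l t a = 1 \<and> l t b = 0"
  shows "set h \<subseteq> {1..2} \<Longrightarrow> pos_prob2 (wsu_pi 2 \<eta> \<gamma> l h)"
proof (induction h)
  case Nil
  show ?case by (simp add: pos_prob2_def)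
next
  case (Cons i h)
  obtain a b where ab: "{a, b} = {1, 2}" and loss: "l (length h + 1) a = 1" "l (length h + 1) b = 0"
    using indicator by blast
  have p: "0 < wsu_pi 2 \<eta> \<gamma> l h a" "0 < wsu_pi 2 \<eta> \<gamma> l h b"
      "wsu_pi 2 \<eta> \<gamma> l h a + wsu_pi 2 \<eta> \<gamma> l h b = 1"
    using Cons pos_prob2_arms[OF ab] by auto
  have "i \<in> {a, b}" using Cons.prems ab by auto
  then show ?case
    using penalized_round(1)[where l = l and t = "length h + 1" and p = "wsu_pi 2 \<eta> \<gamma> l h",
        OF valid ab loss p] pos_prob2_arms[OF ab] by simp
qed

lemma hist_prob_nonneg:
  assumes valid: "valid_pair 2 \<eta> \<gamma>"
    and inv: "\<And>h. set h \<subseteq> {1..2} \<Longrightarrow> pos_prob2 (wsu_pi 2 \<eta> \<gamma> l h)"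
  shows "set h \<subseteq> {1..2} \<Longrightarrow> 0 \<le> hist_prob 2 \<eta> \<gamma> l h"
proof (induction h)
  case Nil
  show ?case by simp
next
  case (Cons i h)
  then have "i = 1 \<or> i = 2" "pos_prob2 (wsu_pi 2 \<eta> \<gamma> l h)" using inv by auto
  then have "0 \<le> wsu_pi 2 \<eta> \<gamma> l h i" by (auto simp: pos_prob2_def)
  then have "2 * \<eta> \<le> mix 2 \<gamma> (wsu_pi 2 \<eta> \<gamma> l h) i" by (rule valid_pair_mix_ge[OF valid])
  then have "0 \<le> mix 2 \<gamma> (wsu_pi 2 \<eta> \<gamma> l h) i" using valid by (simp add: valid_pair_def)
  then show ?case using Cons by simp
qed

lemma two_phase_indicator:
  "\<exists>a b. {a, b} = {1, 2::nat} \<and> two_phase T t a = 1 \<and> two_phase T t b = 0"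
proof (cases "t \<le> T div 100")
  case True
  then show ?thesis by (intro exI[of _ 1] exI[of _ 2]) (simp add: two_phase_def)
next
  case False
  then show ?thesis by (intro exI[of _ 2] exI[of _ 1]) (simp add: two_phase_def insert_commute)
qed

lemma two_phase_pos_prob2:
  "valid_pair 2 \<eta> \<gamma> \<Longrightarrow> set h \<subseteq> {1..2} \<Longrightarrow> pos_prob2 (wsu_pi 2 \<eta> \<gamma> (two_phase T) h)"
  by (rule wsu_pi_pos_prob2[OF _ two_phase_indicator])

lemma two_phase_hist_prob_nonneg:
  "valid_pair 2 \<eta> \<gamma> \<Longrightarrow> set h \<subseteq> {1..2} \<Longrightarrow> 0 \<le> hist_prob 2 \<eta> \<gamma> (two_phase T) h"
  by (rule hist_prob_nonneg[OF _ two_phase_pos_prob2])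

lemma two_phase_odds_step:
  assumes valid: "valid_pair 2 \<eta> \<gamma>" and p: "pos_prob2 p"
  shows "(\<Sum>i=1..2. mix 2 \<gamma> p i * odds (wsu_step 2 \<eta> \<gamma> (two_phase T) t p i))
           \<le> (if t \<le> T div 100 then 1 + 2 * \<eta> else 1 - 2 * \<eta> / 3) * odds p"
proof (cases "t \<le> T div 100")
  case True
  then have "two_phase T t 1 = 1" "two_phase T t 2 = 0" by (simp_all add: two_phase_def)
  from penalized_round(2)[where l = "two_phase T" and t = t and p = p, OF valid _ this] p True
  show ?thesis by (simp add: pos_prob2_def odds_def)
next
  case False
  then have "two_phase T t 2 = 1" "two_phase T t 1 = 0" by (simp_all add: two_phase_def)
  from penalized_round(3)[where l = "two_phase T" and t = t and p = p, OF valid _ this] p False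
  show ?thesis by (simp add: pos_prob2_def odds_def insert_commute)
qed

lemma two_phase_drift_sum:
  assumes "T = 100 * k"
  shows "(\<Sum>t=1..T. if t \<le> T div 100 then 2 * \<eta> else - (2 * \<eta> / 3)) = - 64 * \<eta> * real k"
proof -
  have split: "{1..T} = {1..k} \<union> {Suc k..T}" and "{1..k} \<inter> {Suc k..T} = {}"
    using assms by auto
  have "(\<Sum>t=1..T. if t \<le> T div 100 then 2 * \<eta> else - (2 * \<eta> / 3))
      = (\<Sum>t=1..k. 2 * \<eta>) + (\<Sum>t=Suc k..T. - (2 * \<eta> / 3))"
    unfolding split using assms \<open>{1..k} \<inter> {Suc k..T} = {}\<close>
    by (simp add: sum.union_disjoint)
  also have "\<dots> = - 64 * \<eta> * real k"
    using assms by simp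
  finally show ?thesis .
qed

lemma two_phase_expected_odds:
  assumes valid: "valid_pair 2 \<eta> \<gamma>" and T: "T = 100 * k"
  shows "wsu_expect 2 \<eta> \<gamma> (two_phase T) T odds \<le> exp (- 64 * \<eta> * real k)"
proof -
  let ?c = "\<lambda>t. if t \<le> T div 100 then 1 + 2 * \<eta> else 1 - 2 * \<eta> / 3"
  let ?d = "\<lambda>t. if t \<le> T div 100 then 2 * \<eta> else - (2 * \<eta> / 3)"
  have c: "0 \<le> ?c t \<and> ?c t \<le> exp (?d t)" for t
    using valid exp_ge_add_one_self[of "2 * \<eta>"] exp_ge_add_one_self[of "- (2 * \<eta> / 3)"]
    by (auto simp: valid_pair_def)
  have "wsu_expect 2 \<eta> \<gamma> (two_phase T) T odds \<le> (\<Prod>t=1..T. ?c t) * odds (\<lambda>i. 1 / real 2)"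
    by (rule wsu_expect_le_prod[where P = pos_prob2])
      (use two_phase_hist_prob_nonneg[OF valid] two_phase_pos_prob2[OF valid]
        two_phase_odds_step[OF valid] c in blast)+
  also have "\<dots> = (\<Prod>t=1..T. ?c t)" by (simp add: odds_def)
  also have "\<dots> \<le> (\<Prod>t=1..T. exp (?d t))" using c by (intro prod_mono) blast
  also have "\<dots> = exp (- 64 * \<eta> * real k)"
    by (simp only: exp_sum[OF finite_atLeastAtMost, symmetric] two_phase_drift_sum[OF T])
  finally show ?thesis .
qed

lemma neg_odds_le_ln:
  assumes "pos_prob2 p"
  shows "- odds p \<le> ln (p 1)"
proof -
  have "ln (1 / p 1) \<le> 1 / p 1 - 1" using assms by (intro ln_le_minus_one) (simp add: pos_prob2_def)
  also have "\<dots> = odds p" using assms by (simp add: pos_prob2_def odds_def field_simps)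
  finally show ?thesis using assms by (simp add: pos_prob2_def ln_div)
qed

lemma two_phase_expected_log_weight:
  assumes valid: "valid_pair 2 \<eta> \<gamma>" and T: "T = 100 * k"
  shows "ln 2 - exp (- 64 * \<eta> * real k) \<le> wsu_expect 2 \<eta> \<gamma> (two_phase T) T (\<lambda>p. ln (p 1) + ln 2)"
proof -
  note inv = two_phase_pos_prob2[OF valid]
  have sum1: "(\<Sum>i=1..2. wsu_pi 2 \<eta> \<gamma> (two_phase T) h i) = 1" if "set h \<subseteq> {1..2}" for h
    using inv[OF that] by (simp add: pos_prob2_def numeral_2_eq_2)
  have "wsu_expect 2 \<eta> \<gamma> (two_phase T) T (\<lambda>_. ln 2) = ln 2"
    by (rule wsu_expect_const, simp, rule sum1)
  then have "ln 2 - exp (- 64 * \<eta> * real k)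
      \<le> wsu_expect 2 \<eta> \<gamma> (two_phase T) T (\<lambda>p. ln 2 - odds p)"
    using two_phase_expected_odds[OF valid T] by (simp add: wsu_expect_diff)
  also have "\<dots> \<le> wsu_expect 2 \<eta> \<gamma> (two_phase T) T (\<lambda>p. ln (p 1) + ln 2)"
    by (rule wsu_expect_mono)
      (use two_phase_hist_prob_nonneg[OF valid] inv neg_odds_le_ln in force)+
  finally show ?thesis .
qed

lemma nontrivial_eta_mult_ge:
  assumes "nontrivial T \<eta> \<gamma>" "1000 \<le> T"
  shows "10 \<le> \<eta> * real T"
proof -
  have T: "1000 \<le> real T" using assms(2) by simp
  have "(10::real) = 1000 powr (1/3)"
    by (simp add: powr_powr flip: powr_realpow[of 10 3, simplified])
  also have "\<dots> \<le> real T powr (1/3)" using T by (intro powr_mono2) auto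
  also have "\<dots> = real T powr (-2/3 + 1)" by simp
  also have "\<dots> = real T powr (-2/3) * real T powr 1" by (rule powr_add)
  also have "\<dots> = real T powr (-2/3) * real T"
    using T by simp
  also have "\<dots> \<le> \<eta> * real T"
    using assms(1) by (intro mult_right_mono) (simp_all add: nontrivial_def)
  finally show ?thesis .
qed

lemma ln_five_quarters_add_exp_le_ln_two: "ln (5/4) + exp (-6) \<le> (ln 2 :: real)"
proof -
  have "ln (5/8 :: real) \<le> 5/8 - 1" by (rule ln_le_minus_one) simp
  moreover have "ln (5/4 :: real) = ln (5/8) + ln 2" using ln_mult[of "5/8" 2] by simp
  moreover have "exp (-6 :: real) \<le> 1/7"
    using exp_ge_add_one_self[of "6::real"] by (simp add: exp_minus field_simps)
  ultimately show ?thesis by linarith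
qed

theorem claim1:
  fixes \<eta> \<gamma> :: "nat \<Rightarrow> real"
  assumes "\<And>T. T \<ge> 1 \<Longrightarrow> 100 dvd T \<Longrightarrow>
             valid_pair 2 (\<eta> T) (\<gamma> T) \<and> nontrivial T (\<eta> T) (\<gamma> T)"
  shows "\<exists>T0. \<forall>T. T \<ge> T0 \<longrightarrow> T \<ge> 1 \<longrightarrow> 100 dvd T \<longrightarrow>
           wsu_expect 2 (\<eta> T) (\<gamma> T) (two_phase T) T (\<lambda>p. ln (p 1) + ln 2) \<ge> ln (5/4)"
proof (intro exI[of _ 1000] allI impI)
  fix T :: nat
  assume T: "1000 \<le> T" "1 \<le> T" "100 dvd T"
  then have valid: "valid_pair 2 (\<eta> T) (\<gamma> T)" and nontriv: "nontrivial T (\<eta> T) (\<gamma> T)"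
    using assms by auto
  obtain k where k: "T = 100 * k" using T(3) by blast
  have "1/10 \<le> \<eta> T * real k" using nontrivial_eta_mult_ge[OF nontriv T(1)] k by (simp add: ac_simps)
  then have "- 64 * \<eta> T * real k \<le> -6" by linarith
  then have "exp (- 64 * \<eta> T * real k) \<le> exp (-6)" by simp
  then show "ln (5/4) \<le> wsu_expect 2 (\<eta> T) (\<gamma> T) (two_phase T) T (\<lambda>p. ln (p 1) + ln 2)"
    using two_phase_expected_log_weight[OF valid k] ln_five_quarters_add_exp_le_ln_two by linarith
qed

end
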